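(* Let $q$ be a prime power and $0\le k\le n$. Let $1\le j\le n$ and let $\begin{pmatrix} v_j & \cdots & v_1\\ X_j & \cdots & X_1\end{pmatrix}$ be a $(k+1)\times j$ array which occurs as the first $j$ columns (columns $j,\dots,1$) of the extended representation $\mathrm{EXT}(Y)$ of at least one $Y\in\mathcal{G}_q(n,k)$. Let $w_j=\sum_{\ell=1}^{j}v_\ell$. Then the number $N\begin{pmatrix} v_j & \cdots & v_1\\ X_j & \cdots & X_1\end{pmatrix}$ of subspaces $X\in\mathcal{G}_q(n,k)$ whose extended representation has exactly these first $j$ columns equals $\left[\begin{smallmatrix} n-j\\ k-w_j\end{smallmatrix}\right]_q$.
   Context: $\mathbb{F}_q$ is the finite field of size $q$; its elements are identified with $\mathbb{Z}_q=\{0,\dots,q-1\}$ by a fixed bijection (with $0\mapsto 0$, $1\mapsto 1$). $\mathcal{G}_q(n,k)$ is the set of all $k$-dimensional subspaces of $\mathbb{F}_q^n$. The $q$-ary Gaussian coefficient is $\left[\begin{smallmatrix} n\\ k\end{smallmatrix}\right]_q=\prod_{i=0}^{k-1}\frac{q^{n-i}-1}{q^{k-i}-1}$, with $\left[\begin{smallmatrix} n\\ 0\end{smallmatrix}\right]_q=1$ and $\left[\begin{smallmatrix} n\\ k\end{smallmatrix}\right]_q=0$ if $k>n$ or $k<0$. For $X\in\mathcal{G}_q(n,k)$, $\mathrm{RE}(X)$ is the unique $k\times n$ matrix in reduced row echelon form whose rows span $X$; its columns are labelled $X_n,\dots,X_2,X_1$ from left to right (so $X_1$ is the rightmost column). The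 identifying vector $v(X)=(v(X)_n,\dots,v(X)_1)$ is the binary vector of weight $k$ with $v(X)_i=1$ iff column $X_i$ of $\mathrm{RE}(X)$ contains the leading one (pivot) of some row. The extended representation $\mathrm{EXT}(X)$ is the $(k+1)\times n$ matrix whose top row is $v(X)$ and whose remaining $k$ rows are $\mathrm{RE}(X)$; its $i$-th column is $\binom{v(X)_i}{X_i}$, and "the first $j$ columns" means the columns indexed $1,\dots,j$ (the rightmost $j$ columns). *)

theory Defs
  imports Complex_Main
begin

(* Vectors of F^n: functions nat => 'a supported on {1..n}; coordinate i is
   the entry in column X_i (column n is leftmost, column 1 rightmost). *)
definition vecs :: "nat \<Rightarrow> (nat \<Rightarrow> 'a::field) set" where
  "vecs n = {x. \<forall>i. i \<notin> {1..n} \<longrightarrow> x i = 0}"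

definition row_span :: "nat \<Rightarrow> (nat \<Rightarrow> nat \<Rightarrow> 'a::field) \<Rightarrow> (nat \<Rightarrow> 'a) set" where
  "row_span k r = {x. \<exists>c. x = (\<lambda>i. \<Sum>t<k. c t * r t i)}"

definition lin_indep_rows :: "nat \<Rightarrow> (nat \<Rightarrow> nat \<Rightarrow> 'a::field) \<Rightarrow> bool" where
  "lin_indep_rows k r \<longleftrightarrow> (\<forall>c. (\<forall>i. (\<Sum>t<k. c t * r t i) = 0) \<longrightarrow> (\<forall>t<k. c t = 0))"

definition Grass :: "nat \<Rightarrow> nat \<Rightarrow> (nat \<Rightarrow> 'a::field) set set" where
  "Grass n k = {X. \<exists>r. (\<forall>t<k. r t \<in> vecs n) \<and> lin_indep_rows k r \<and> X = row_span k r}"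

(* position of the leading one (leftmost nonzero entry = largest index) of a row *)
definition lead :: "(nat \<Rightarrow> 'a::zero) \<Rightarrow> nat" where
  "lead x = (GREATEST i. x i \<noteq> 0)"

(* M is a k x n matrix in reduced row echelon form (rows 0..k-1 from top,
   columns labelled n..1 from left to right); entries outside are zero. *)
definition rref :: "nat \<Rightarrow> nat \<Rightarrow> (nat \<Rightarrow> nat \<Rightarrow> 'a::field) \<Rightarrow> bool" where
  "rref n k M \<longleftrightarrow>
     (\<forall>t i. (t \<ge> k \<or> i \<notin> {1..n}) \<longrightarrow> M t i = 0) \<and>
     (\<forall>t<k. \<exists>i. M t i \<noteq> 0) \<and>
     (\<forall>t<k. M t (lead (M t)) = 1) \<and>
     (\<forall>s t. s < t \<and> t < k \<longrightarrow> lead (M t) < lead (M s)) \<and>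
     (\<forall>s<k. \<forall>t<k. s \<noteq> t \<longrightarrow> M s (lead (M t)) = 0)"

definition RE :: "nat \<Rightarrow> nat \<Rightarrow> (nat \<Rightarrow> 'a::field) set \<Rightarrow> (nat \<Rightarrow> nat \<Rightarrow> 'a)" where
  "RE n k X = (THE M. rref n k M \<and> row_span k M = X)"

definition idv :: "nat \<Rightarrow> nat \<Rightarrow> (nat \<Rightarrow> 'a::field) set \<Rightarrow> nat \<Rightarrow> nat" where
  "idv n k X i = (if \<exists>t<k. lead (RE n k X t) = i then 1 else 0)"

(* EXT(X): column i is (v(X)_i, RE(X)_{0,i}, ..., RE(X)_{k-1,i}).
   "The first j columns of EXT(X) are (v, A)": *)
definition ext_first_cols ::
  "nat \<Rightarrow> nat \<Rightarrow> nat \<Rightarrow> (nat \<Rightarrow> 'a::field) set \<Rightarrow> (nat \<Rightarrow> nat) \<Rightarrow> (nat \<Rightarrow> nat \<Rightarrow> 'a) \<Rightarrow> bool" where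
  "ext_first_cols n k j X v A \<longleftrightarrow>
     (\<forall>i\<in>{1..j}. idv n k X i = v i \<and> (\<forall>t<k. RE n k X t i = A t i))"

definition qbinom :: "nat \<Rightarrow> nat \<Rightarrow> int \<Rightarrow> real" where
  "qbinom q n k = (if k < 0 \<or> k > int n then 0
     else (\<Prod>i<nat k. (real q ^ (n - i) - 1) / (real q ^ (nat k - i) - 1)))"

end

theory Submission
  imports Defs
begin

text \<open>A subspace has a unique basis in reduced row echelon form, so the subspaces whose extended
  representation begins with the given \<open>j\<close> columns correspond to the \<open>k \<times> n\<close> reduced echelon
  matrices with these columns. Their pivots inside the prescribed columns lie in the bottom
  \<open>w\<^sub>j\<close> rows, which are therefore determined completely; the top \<open>p = k - w\<^sub>j\<close> rows are
  determined outside their top-left \<open>p \<times> (n - j)\<close> block, and that block ranges over all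
  \<open>p \<times> (n - j)\<close> reduced echelon matrices. Splitting the \<open>p \<times> m\<close> reduced echelon matrices
  by whether the first row has its pivot in the leftmost column gives the q-Pascal recursion,
  so there are \<open>[m choose p]\<^sub>q\<close> of them.\<close>

lemma lead_bounded:
  fixes x :: "nat \<Rightarrow> 'a::zero"
  assumes "\<forall>i>N. x i = 0" and "x i \<noteq> 0"
  shows "x (lead x) \<noteq> 0" and "i \<le> lead x" and "lead x \<le> N"
proof -
  have bound: "\<And>y. x y \<noteq> 0 \<Longrightarrow> y \<le> N" using assms(1) by (meson not_le)
  show "x (lead x) \<noteq> 0"
    unfolding lead_def by (rule GreatestI_nat[where P="\<lambda>i. x i \<noteq> 0", OF assms(2) bound])
  show "i \<le> lead x"
    unfolding lead_def by (rule Greatest_le_nat[where P="\<lambda>i. x i \<noteq> 0", OF assms(2) bound])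
  then show "lead x \<le> N" using bound \<open>x (lead x) \<noteq> 0\<close> by blast
qed

lemma lead_eqI:
  fixes x :: "nat \<Rightarrow> 'a::zero"
  assumes "x i \<noteq> 0" and "\<forall>j>i. x j = 0"
  shows "lead x = i"
  unfolding lead_def by (rule Greatest_equality) (use assms in \<open>auto simp: not_less[symmetric]\<close>)

context
  fixes n k :: nat and M :: "nat \<Rightarrow> nat \<Rightarrow> 'a::field"
  assumes R: "rref n k M"
begin

lemma rref_zero: "k \<le> t \<or> i \<notin> {1..n} \<Longrightarrow> M t i = 0"
  using R unfolding rref_def by auto

lemma rref_pivot: "t < k \<Longrightarrow> M t (lead (M t)) = 1"
  using R unfolding rref_def by auto

lemma rref_pivot_col: "s < k \<Longrightarrow> t < k \<Longrightarrow> M s (lead (M t)) = (if s = t then 1 else 0)"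
  using R unfolding rref_def by auto

lemma rref_lead_mono: "s < t \<Longrightarrow> t < k \<Longrightarrow> lead (M t) < lead (M s)"
  using R unfolding rref_def by auto

lemma rref_lead_antimono: "s \<le> t \<Longrightarrow> t < k \<Longrightarrow> lead (M t) \<le> lead (M s)"
  using rref_lead_mono[of s t] by (cases "s = t") auto

lemma rref_lead_inj: "s < k \<Longrightarrow> t < k \<Longrightarrow> lead (M s) = lead (M t) \<Longrightarrow> s = t"
  using rref_lead_mono[of s t] rref_lead_mono[of t s] by (metis less_irrefl nat_neq_iff)

lemma rref_beyond_lead:
  assumes t: "t < k" and i: "lead (M t) < i"
  shows "M t i = 0"
proof -
  have "\<forall>i>n. M t i = 0" using rref_zero by auto
  from lead_bounded(2)[OF this] i show ?thesis by (meson not_le)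
qed

lemma rref_lead_range:
  assumes t: "t < k"
  shows "1 \<le> lead (M t)" and "lead (M t) \<le> n"
proof -
  have nz: "M t (lead (M t)) \<noteq> 0" using rref_pivot[OF t] by simp
  then show "1 \<le> lead (M t)" using rref_zero[of t 0] by (cases "lead (M t)") auto
  show "lead (M t) \<le> n" using nz rref_zero[of t] by (meson atLeastAtMost_iff leI)
qed

end

lemma row_span_iff: "x \<in> row_span k r \<longleftrightarrow> (\<exists>c. x = (\<lambda>i. \<Sum>t<k. c t * r t i))"
  unfolding row_span_def by auto

lemma row_span_zero: "(\<lambda>i. 0) \<in> row_span k r"
  unfolding row_span_iff by (rule exI[of _ "\<lambda>_. 0"]) simp

lemma row_span_add:
  assumes "x \<in> row_span k r" and "y \<in> row_span k r"
  shows "(\<lambda>i. x i + y i) \<in> row_span k r"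
proof -
  obtain c d where "x = (\<lambda>i. \<Sum>t<k. c t * r t i)" "y = (\<lambda>i. \<Sum>t<k. d t * r t i)"
    using assms unfolding row_span_iff by blast
  then show ?thesis unfolding row_span_iff
    by (intro exI[of _ "\<lambda>t. c t + d t"]) (simp add: sum.distrib algebra_simps)
qed

lemma row_span_smult:
  assumes "x \<in> row_span k r"
  shows "(\<lambda>i. a * x i) \<in> row_span k r"
proof -
  obtain c where "x = (\<lambda>i. \<Sum>t<k. c t * r t i)" using assms unfolding row_span_iff by blast
  then show ?thesis unfolding row_span_iff
    by (intro exI[of _ "\<lambda>t. a * c t"]) (simp add: sum_distrib_left algebra_simps)
qed

lemma row_span_diff:
  "x \<in> row_span k r \<Longrightarrow> y \<in> row_span k r \<Longrightarrow> (\<lambda>i. x i - y i) \<in> row_span k r"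
  using row_span_add[OF _ row_span_smult[of y k r "-1"], of x] by simp

lemma sum_delta_mult:
  "(t::nat) < k \<Longrightarrow> (\<Sum>s<k. (if s = t then 1 else 0) * (f s :: 'a::comm_ring_1)) = f t"
  by (simp add: if_distrib[of "\<lambda>a. a * _"] cong: if_cong)

lemma row_span_row: "t < k \<Longrightarrow> r t \<in> row_span k r"
  unfolding row_span_iff
  by (intro exI[of _ "\<lambda>s. if s = t then 1 else 0"]) (simp add: sum_delta_mult)

lemma row_span_sum:
  assumes "finite S" and "\<forall>x\<in>S. f x \<in> row_span k r"
  shows "(\<lambda>i. \<Sum>x\<in>S. c x * f x i) \<in> row_span k r"
  using assms
proof (induction S rule: finite_induct)
  case empty
  then show ?case using row_span_zero by simp
next
  case (insert a S)
  have "(\<lambda>i. c a * f a i + (\<Sum>x\<in>S. c x * f x i)) \<in> row_span k r"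
    using insert by (intro row_span_add row_span_smult) auto
  then show ?case using insert by simp
qed

lemma row_span_subset:
  assumes "\<forall>t<k. r t \<in> row_span k' r'"
  shows "row_span k r \<subseteq> row_span k' r'"
proof
  fix x assume "x \<in> row_span k r"
  then obtain c where "x = (\<lambda>i. \<Sum>t<k. c t * r t i)" unfolding row_span_iff by blast
  then show "x \<in> row_span k' r'" using row_span_sum[of "{..<k}" r k' r' c] assms by simp
qed

lemma row_span_eqI:
  assumes "\<forall>t<k. r t \<in> row_span k' r'" and "\<forall>t<k'. r' t \<in> row_span k r"
  shows "row_span k r = row_span k' r'"
  using row_span_subset assms by (metis subset_antisym)

lemma rref_coeff:
  assumes R: "rref n k M" and s: "s < k"
  shows "(\<Sum>t<k. c t * M t (lead (M s))) = c s"
  using rref_pivot_col[OF R _ s] s sum_delta_mult[of s k c] by (simp add: mult.commute)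

lemma rref_span_repr:
  assumes R: "rref n k M" and x: "x \<in> row_span k M"
  shows "x = (\<lambda>i. \<Sum>t<k. x (lead (M t)) * M t i)"
proof -
  obtain c where c: "x = (\<lambda>i. \<Sum>t<k. c t * M t i)" using x unfolding row_span_iff by blast
  then have "\<forall>t<k. x (lead (M t)) = c t" using rref_coeff[OF R] by simp
  then show ?thesis using c by (auto intro!: sum.cong)
qed

text \<open>The leading position of a nonzero vector of the span is the leading position of the first
  row whose coefficient is nonzero.\<close>

lemma rref_span_lead:
  assumes R: "rref n k M" and x: "x \<in> row_span k M" and nz: "x i0 \<noteq> 0"
  shows "\<exists>s<k. lead x = lead (M s)"
proof -
  let ?c = "\<lambda>t. x (lead (M t))"
  have xr: "x = (\<lambda>i. \<Sum>t<k. ?c t * M t i)" by (rule rref_span_repr[OF R x])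
  have ex: "\<exists>t. t < k \<and> ?c t \<noteq> 0"
  proof (rule ccontr)
    assume "\<not> ?thesis"
    then have "x i0 = 0" by (subst xr) simp
    with nz show False by simp
  qed
  define s where "s = (LEAST t. t < k \<and> ?c t \<noteq> 0)"
  have s: "s < k" "?c s \<noteq> 0" using LeastI_ex[OF ex] unfolding s_def by auto
  have before: "?c t = 0" if "t < s" for t
    using not_less_Least[of t "\<lambda>t. t < k \<and> ?c t \<noteq> 0"] that s(1) unfolding s_def by auto
  have "?c t * M t i = 0" if "t < k" and "lead (M s) < i" for t i
  proof (cases "t < s")
    case False
    then have "lead (M t) \<le> lead (M s)" using rref_lead_antimono[OF R _ \<open>t < k\<close>] by simp
    then show ?thesis using rref_beyond_lead[OF R \<open>t < k\<close>, of i] \<open>lead (M s) < i\<close> by simp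
  qed (use before in simp)
  then have "\<forall>i>lead (M s). x i = 0" by (subst xr) (simp add: sum.neutral)
  then have "lead x = lead (M s)" using s(2) by (intro lead_eqI) auto
  then show ?thesis using s by blast
qed

lemma rref_lead_le_of_subspan:
  assumes R: "rref n k M" and R': "rref n k M'" and sub: "row_span k M' \<subseteq> row_span k M"
    and IH: "\<forall>s<t. lead (M s) = lead (M' s)" and t: "t < k"
  shows "lead (M' t) \<le> lead (M t)"
proof -
  have "M' t \<in> row_span k M" using sub row_span_row[OF t] by blast
  moreover have "M' t (lead (M' t)) \<noteq> 0" using rref_pivot[OF R' t] by simp
  ultimately obtain s where s: "s < k" "lead (M' t) = lead (M s)"
    using rref_span_lead[OF R] by blast
  show ?thesis
  proof (cases "s < t")
    case True
    then have "lead (M' t) < lead (M' s)" using rref_lead_mono[OF R' True t] by simp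
    with IH True s show ?thesis by simp
  next
    case False
    then show ?thesis using s rref_lead_antimono[OF R _ s(1), of t] by simp
  qed
qed

lemma rref_same_span_leads:
  assumes R: "rref n k M" and R': "rref n k M'" and eq: "row_span k M = row_span k M'"
  shows "t < k \<Longrightarrow> lead (M t) = lead (M' t)"
proof (induction t rule: less_induct)
  case (less t)
  then have IH: "\<forall>s<t. lead (M s) = lead (M' s)" by simp
  have "lead (M' t) \<le> lead (M t)"
    using rref_lead_le_of_subspan[OF R R' _ IH less.prems] eq by simp
  moreover have "lead (M t) \<le> lead (M' t)"
    using rref_lead_le_of_subspan[OF R' R _ _ less.prems] eq IH by simp
  ultimately show ?case by simp
qed

lemma rref_unique:
  assumes R: "rref n k M" and R': "rref n k M'" and eq: "row_span k M = row_span k M'"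
  shows "M = M'"
proof
  fix t
  show "M t = M' t"
  proof (cases "t < k")
    case False
    then show ?thesis using rref_zero[OF R] rref_zero[OF R'] by auto
  next
    case True
    have "M' t \<in> row_span k M" using eq row_span_row[OF True] by blast
    then have "M' t = (\<lambda>i. \<Sum>s<k. M' t (lead (M s)) * M s i)" by (rule rref_span_repr[OF R])
    also have "\<dots> = (\<lambda>i. \<Sum>s<k. (if s = t then 1 else 0) * M s i)"
      using rref_same_span_leads[OF R R' eq] rref_pivot_col[OF R' True] True
      by (intro ext sum.cong) auto
    also have "\<dots> = M t" using True by (simp add: sum_delta_mult)
    finally show ?thesis by simp
  qed
qed

lemma RE_rref: "rref n k M \<Longrightarrow> RE n k (row_span k M) = M"
  unfolding RE_def by (rule the_equality) (auto dest: rref_unique)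

lemma rref_lin_indep: "rref n k M \<Longrightarrow> lin_indep_rows k M"
  unfolding lin_indep_rows_def
proof (intro allI impI)
  fix c t assume R: "rref n k M" and z: "\<forall>i. (\<Sum>t<k. c t * M t i) = 0" and t: "t < k"
  from rref_coeff[OF R t, of c] z show "c t = 0" by simp
qed

lemma row_span_rref_Grass: "rref n k M \<Longrightarrow> row_span k M \<in> Grass n k"
  unfolding Grass_def vecs_def using rref_lin_indep rref_zero by blast

definition cons_row :: "(nat \<Rightarrow> 'a) \<Rightarrow> (nat \<Rightarrow> nat \<Rightarrow> 'a) \<Rightarrow> nat \<Rightarrow> nat \<Rightarrow> 'a" where
  "cons_row f M = (\<lambda>t. if t = 0 then f else M (t - 1))"

lemma cons_row_simps [simp]: "cons_row f M 0 = f" "cons_row f M (Suc t) = M t"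
  unfolding cons_row_def by auto

lemma cons_row_head_tail: "cons_row (r 0) (\<lambda>t. r (Suc t)) = r"
  unfolding cons_row_def by (auto intro!: ext simp: gr0_conv_Suc)

lemma row_span_cons_row_head: "f \<in> row_span (Suc k) (cons_row f M)"
  using row_span_row[of 0 "Suc k" "cons_row f M"] by simp

lemma row_span_tail_subset: "row_span k M \<subseteq> row_span (Suc k) (cons_row f M)"
proof (rule row_span_subset, intro allI impI)
  fix t assume "t < k"
  then show "M t \<in> row_span (Suc k) (cons_row f M)"
    using row_span_row[of "Suc t" "Suc k" "cons_row f M"] by simp
qed

lemma row_span_cons_row_subset:
  assumes f: "f \<in> row_span (Suc k') N" and M: "row_span k M \<subseteq> row_span (Suc k') N"
  shows "row_span (Suc k) (cons_row f M) \<subseteq> row_span (Suc k') N"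
proof (rule row_span_subset, intro allI impI)
  fix t assume "t < Suc k"
  then show "cons_row f M t \<in> row_span (Suc k') N"
    using f M row_span_row[of "t - 1" k M] by (cases t) auto
qed

lemma row_span_cons_row_cong:
  assumes "row_span k M = row_span k M'"
  shows "row_span (Suc k) (cons_row f M) = row_span (Suc k) (cons_row f M')"
proof (intro subset_antisym row_span_cons_row_subset row_span_cons_row_head)
  show "row_span k M \<subseteq> row_span (Suc k) (cons_row f M')"
    using assms row_span_tail_subset by blast
  show "row_span k M' \<subseteq> row_span (Suc k) (cons_row f M)"
    using assms row_span_tail_subset by blast
qed

lemma row_span_cons_row_scale:
  assumes "a \<noteq> 0"
  shows "row_span (Suc k) (cons_row (\<lambda>i. a * f i) M) = row_span (Suc k) (cons_row f M)"
proof (intro subset_antisym row_span_cons_row_subset row_span_tail_subset)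
  show "(\<lambda>i. a * f i) \<in> row_span (Suc k) (cons_row f M)"
    by (intro row_span_smult row_span_cons_row_head)
  have "(\<lambda>i. inverse a * (a * f i)) \<in> row_span (Suc k) (cons_row (\<lambda>i. a * f i) M)"
    by (rule row_span_smult[OF row_span_cons_row_head])
  then show "f \<in> row_span (Suc k) (cons_row (\<lambda>i. a * f i) M)"
    using assms by (simp add: mult.assoc[symmetric])
qed

lemma row_span_cons_row_translate:
  assumes y: "y \<in> row_span k M"
  shows "row_span (Suc k) (cons_row (\<lambda>i. f i - y i) M) = row_span (Suc k) (cons_row f M)"
proof (intro subset_antisym row_span_cons_row_subset row_span_tail_subset)
  have y': "y \<in> row_span (Suc k) (cons_row g M)" for g using y row_span_tail_subset by blast
  show "(\<lambda>i. f i - y i) \<in> row_span (Suc k) (cons_row f M)"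
    by (intro row_span_diff row_span_cons_row_head y')
  have "(\<lambda>i. (f i - y i) + y i) \<in> row_span (Suc k) (cons_row (\<lambda>i. f i - y i) M)"
    by (intro row_span_add row_span_cons_row_head y')
  then show "f \<in> row_span (Suc k) (cons_row (\<lambda>i. f i - y i) M)" by simp
qed

lemma row_span_cons_row_shear:
  "row_span (Suc k) (cons_row f (\<lambda>t i. M t i - c t * f i)) = row_span (Suc k) (cons_row f M)"
  (is "row_span _ (cons_row f ?M') = _")
proof (intro subset_antisym row_span_cons_row_subset row_span_cons_row_head;
       rule row_span_subset; intro allI impI)
  fix t assume t: "t < k"
  have tail: "N t \<in> row_span (Suc k) (cons_row f N)" for N :: "nat \<Rightarrow> nat \<Rightarrow> 'a"
    using row_span_tail_subset row_span_row[OF t] by blast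
  show "?M' t \<in> row_span (Suc k) (cons_row f M)"
    by (intro row_span_diff row_span_smult tail row_span_cons_row_head)
  have "(\<lambda>i. ?M' t i + c t * f i) \<in> row_span (Suc k) (cons_row f ?M')"
    by (intro row_span_add row_span_smult tail row_span_cons_row_head)
  then show "M t \<in> row_span (Suc k) (cons_row f ?M')" by simp
qed

lemma lin_indep_rows_cons_row_shear:
  assumes I: "lin_indep_rows (Suc k) (cons_row f M)"
  shows "lin_indep_rows k (\<lambda>t i. M t i - c t * f i)"
  unfolding lin_indep_rows_def
proof (intro allI impI)
  fix d t assume z: "\<forall>i. (\<Sum>t<k. d t * (M t i - c t * f i)) = 0" and t: "t < k"
  define e where "e = (\<lambda>t. if t = 0 then - (\<Sum>s<k. d s * c s) else d (t - 1))"
  have "(\<Sum>t<Suc k. e t * cons_row f M t i) = (\<Sum>t<k. d t * (M t i - c t * f i))" for i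
    unfolding sum.lessThan_Suc_shift e_def
    by (simp add: right_diff_distrib sum_subtractf sum_distrib_right mult.assoc)
  then have "e (Suc t) = 0" using I z t unfolding lin_indep_rows_def by simp
  then show "d t = 0" by (simp add: e_def)
qed

lemma row_span_reindex:
  assumes \<sigma>: "\<forall>t<k. \<sigma> t < k \<and> \<sigma> (\<sigma> t) = t"
  shows "row_span k (\<lambda>t. r (\<sigma> t)) = row_span k r"
proof (rule row_span_eqI; intro allI impI)
  fix t assume t: "t < k"
  then have \<sigma>t: "\<sigma> t < k" using \<sigma> by simp
  then show "r (\<sigma> t) \<in> row_span k r" by (rule row_span_row)
  have "r (\<sigma> (\<sigma> t)) \<in> row_span k (\<lambda>t. r (\<sigma> t))" using row_span_row[OF \<sigma>t] .
  then show "r t \<in> row_span k (\<lambda>t. r (\<sigma> t))" using \<sigma> t by simp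
qed

lemma lin_indep_rows_reindex:
  assumes \<sigma>: "\<forall>t<k. \<sigma> t < k \<and> \<sigma> (\<sigma> t) = t" and I: "lin_indep_rows k r"
  shows "lin_indep_rows k (\<lambda>t. r (\<sigma> t))"
  unfolding lin_indep_rows_def
proof (intro allI impI)
  fix c t assume z: "\<forall>i. (\<Sum>t<k. c t * r (\<sigma> t) i) = 0" and t: "t < k"
  have "(\<Sum>t<k. c (\<sigma> t) * r t i) = (\<Sum>t<k. c t * r (\<sigma> t) i)" for i
    by (rule sum.reindex_bij_witness[where i=\<sigma> and j=\<sigma>]) (simp_all add: \<sigma>)
  then have "\<forall>i. (\<Sum>t<k. c (\<sigma> t) * r t i) = 0" using z by simp
  then have "\<forall>t<k. c (\<sigma> t) = 0"
    using I unfolding lin_indep_rows_def by (rule spec[of _ "\<lambda>t. c (\<sigma> t)", THEN mp, rotated])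
  moreover have "\<sigma> t < k" and "\<sigma> (\<sigma> t) = t" using \<sigma> t by auto
  ultimately show "c t = 0" by metis
qed

lemma rref_Suc: "rref m k M \<Longrightarrow> rref (Suc m) k M"
  unfolding rref_def by auto

lemma rref_cons_row:
  assumes R: "rref m p M" and f1: "f (Suc m) = 1" and fz: "\<forall>i. i \<notin> {1..Suc m} \<longrightarrow> f i = 0"
    and fp: "\<forall>s<p. f (lead (M s)) = 0"
  shows "rref (Suc m) (Suc p) (cons_row f M)"
proof -
  have L0: "lead f = Suc m" by (rule lead_eqI) (use f1 fz in auto)
  have lead_tail: "lead (M t) < Suc m" if "t < p" for t using rref_lead_range(2)[OF R that] by simp
  show ?thesis unfolding rref_def
  proof (intro conjI allI impI)
    fix t i assume "Suc p \<le> t \<or> i \<notin> {1..Suc m}"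
    then show "cons_row f M t i = 0" using fz rref_zero[OF R, of "t - 1" i] by (cases t) auto
  next
    fix t assume "t < Suc p"
    then show "cons_row f M t (lead (cons_row f M t)) = 1"
      using f1 L0 rref_pivot[OF R] by (cases t) auto
    then show "\<exists>i. cons_row f M t i \<noteq> 0" by (intro exI[of _ "lead (cons_row f M t)"]) simp
  next
    fix s t assume "s < t \<and> t < Suc p"
    then show "lead (cons_row f M t) < lead (cons_row f M s)"
      using L0 lead_tail rref_lead_mono[OF R] by (cases s; cases t) auto
  next
    fix s t assume "s < Suc p" "t < Suc p" "s \<noteq> t"
    then show "cons_row f M s (lead (cons_row f M t)) = 0"
      using L0 fp rref_zero[OF R, of _ "Suc m"] rref_pivot_col[OF R] by (cases s; cases t) auto
  qed
qed

lemma rref_cons_row_reduce: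
  assumes R: "rref m p M" and u1: "u (Suc m) = 1" and uz: "\<forall>i. i \<notin> {1..Suc m} \<longrightarrow> u i = 0"
  defines "f \<equiv> \<lambda>i. u i - (\<Sum>s<p. u (lead (M s)) * M s i)"
  shows "rref (Suc m) (Suc p) (cons_row f M)"
    and "row_span (Suc p) (cons_row f M) = row_span (Suc p) (cons_row u M)"
proof -
  have "\<forall>s<p. f (lead (M s)) = 0"
    using rref_coeff[OF R, of _ "\<lambda>s. u (lead (M s))"] unfolding f_def by simp
  moreover have "f (Suc m) = 1" using u1 rref_zero[OF R] unfolding f_def by simp
  moreover have "M s i = 0" if "i \<notin> {1..Suc m}" for s i using that rref_zero[OF R] by auto
  then have "\<forall>i. i \<notin> {1..Suc m} \<longrightarrow> f i = 0" using uz unfolding f_def by simp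
  ultimately show "rref (Suc m) (Suc p) (cons_row f M)" by (intro rref_cons_row[OF R])
  have "\<forall>s\<in>{..<p}. M s \<in> row_span p M" by (simp add: row_span_row)
  then have "(\<lambda>i. \<Sum>s<p. u (lead (M s)) * M s i) \<in> row_span p M" by (intro row_span_sum) simp
  then show "row_span (Suc p) (cons_row f M) = row_span (Suc p) (cons_row u M)"
    unfolding f_def by (rule row_span_cons_row_translate)
qed

lemma eliminate_last_column:
  fixes r :: "nat \<Rightarrow> nat \<Rightarrow> 'a::field"
  assumes V: "\<forall>t<Suc p. r t \<in> vecs (Suc m)" and I: "lin_indep_rows (Suc p) r"
    and a: "r 0 (Suc m) \<noteq> 0"
  defines "u \<equiv> \<lambda>i. inverse (r 0 (Suc m)) * r 0 i"
    and "tail \<equiv> \<lambda>t i. r (Suc t) i - r (Suc t) (Suc m) / r 0 (Suc m) * r 0 i"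
  shows "u (Suc m) = 1" and "\<forall>i. i \<notin> {1..Suc m} \<longrightarrow> u i = 0"
    and "\<forall>t<p. tail t \<in> vecs m" and "lin_indep_rows p tail"
    and "row_span (Suc p) (cons_row u tail) = row_span (Suc p) r"
proof -
  have r0: "r 0 \<in> vecs (Suc m)" using V by simp
  show "u (Suc m) = 1" using a unfolding u_def by simp
  show "\<forall>i. i \<notin> {1..Suc m} \<longrightarrow> u i = 0" using r0 unfolding u_def vecs_def by simp
  show "\<forall>t<p. tail t \<in> vecs m"
  proof (intro allI impI)
    fix t assume "t < p"
    then have rt: "r (Suc t) \<in> vecs (Suc m)" using V by simp
    have "tail t i = 0" if "i \<notin> {1..m}" for i
    proof (cases "i = Suc m")
      case False
      with that rt r0 show ?thesis unfolding tail_def vecs_def by auto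
    qed (use a in \<open>simp add: tail_def\<close>)
    then show "tail t \<in> vecs m" unfolding vecs_def by blast
  qed
  have r: "r = cons_row (r 0) (\<lambda>t. r (Suc t))" by (rule cons_row_head_tail[symmetric])
  show "lin_indep_rows p tail"
    unfolding tail_def by (rule lin_indep_rows_cons_row_shear) (use I r in simp)
  have "row_span (Suc p) (cons_row u tail) = row_span (Suc p) (cons_row (r 0) tail)"
    unfolding u_def using a by (intro row_span_cons_row_scale) simp
  also have "\<dots> = row_span (Suc p) (cons_row (r 0) (\<lambda>t. r (Suc t)))"
    unfolding tail_def by (rule row_span_cons_row_shear)
  finally show "row_span (Suc p) (cons_row u tail) = row_span (Suc p) r"
    by (simp add: cons_row_head_tail)
qed

lemma obtain_row_to_top:
  assumes t0: "t0 < k"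
  obtains r' where "\<forall>t<k. \<exists>s<k. r' t = r s" and "r' 0 = r t0"
    and "lin_indep_rows k r \<Longrightarrow> lin_indep_rows k r'" and "row_span k r' = row_span k r"
proof
  define \<sigma> where "\<sigma> = (\<lambda>t. if t = 0 then t0 else if t = t0 then 0 else t)"
  have \<sigma>: "\<forall>t<k. \<sigma> t < k \<and> \<sigma> (\<sigma> t) = t" using t0 unfolding \<sigma>_def by auto
  show "\<forall>t<k. \<exists>s<k. r (\<sigma> t) = r s" using \<sigma> by blast
  show "r (\<sigma> 0) = r t0" unfolding \<sigma>_def by simp
  show "lin_indep_rows k r \<Longrightarrow> lin_indep_rows k (\<lambda>t. r (\<sigma> t))" by (rule lin_indep_rows_reindex[OF \<sigma>])
  show "row_span k (\<lambda>t. r (\<sigma> t)) = row_span k r" by (rule row_span_reindex[OF \<sigma>])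
qed

lemma rref_exists:
  fixes r :: "nat \<Rightarrow> nat \<Rightarrow> 'a::field"
  assumes "\<forall>t<k. r t \<in> vecs n" and "lin_indep_rows k r"
  shows "\<exists>M. rref n k M \<and> row_span k M = row_span k r"
  using assms
proof (induction n arbitrary: k r)
  case 0
  then have "r t i = 0" if "t < k" for t i using that unfolding vecs_def by auto
  then have "\<forall>i. (\<Sum>t<k. 1 * r t i) = 0" by simp
  then have "\<forall>t<k. (1::'a) = 0"
    using "0.prems"(2) unfolding lin_indep_rows_def by (rule spec[of _ "\<lambda>_. 1", THEN mp, rotated])
  then have "k = 0" by auto
  moreover have "rref 0 0 (\<lambda>t i. (0::'a))" unfolding rref_def by auto
  ultimately show ?case unfolding row_span_def by auto
next
  case (Suc m)
  show ?case
  proof (cases "\<forall>t<k. r t (Suc m) = 0")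
    case True
    then have "\<forall>t<k. r t \<in> vecs m" using Suc.prems(1) unfolding vecs_def by (auto simp: le_Suc_eq)
    then show ?thesis using Suc.IH Suc.prems(2) rref_Suc by blast
  next
    case False
    then obtain t0 where t0: "t0 < k" "r t0 (Suc m) \<noteq> 0" by blast
    then obtain p where k: "k = Suc p" by (cases k) auto
    obtain r1 where r1: "\<forall>t<k. \<exists>s<k. r1 t = r s" "r1 0 = r t0" "lin_indep_rows k r1"
      "row_span k r1 = row_span k r"
      using obtain_row_to_top[OF t0(1), of r] Suc.prems(2) by metis
    have V1: "\<forall>t<Suc p. r1 t \<in> vecs (Suc m)" using r1(1) Suc.prems(1) k by metis
    have a: "r1 0 (Suc m) \<noteq> 0" using t0(2) r1(2) by simp
    note E = eliminate_last_column[OF V1 r1(3)[unfolded k] a]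
    obtain B where B: "rref m p B"
      "row_span p B = row_span p (\<lambda>t i. r1 (Suc t) i - r1 (Suc t) (Suc m) / r1 0 (Suc m) * r1 0 i)"
      using Suc.IH[OF E(3,4)] by blast
    obtain M where M: "rref (Suc m) (Suc p) M"
      "row_span (Suc p) M = row_span (Suc p) (cons_row (\<lambda>i. inverse (r1 0 (Suc m)) * r1 0 i) B)"
      using rref_cons_row_reduce[OF B(1) E(1,2)] by blast
    have "row_span k r = row_span (Suc p) M"
      using M(2) E(5) row_span_cons_row_cong[OF B(2)] r1(4) k by simp
    then show ?thesis using M(1) k by auto
  qed
qed

lemma Grass_rref: "X \<in> Grass n k \<Longrightarrow> \<exists>M. rref n k M \<and> row_span k M = X"
  unfolding Grass_def using rref_exists by blast

definition supported_on :: "nat set \<Rightarrow> (nat \<Rightarrow> 'a::zero) set" where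
  "supported_on F = {f. \<forall>i. i \<notin> F \<longrightarrow> f i = 0}"

lemma bij_betw_supported_on_insert:
  assumes "x \<notin> F"
  shows "bij_betw (\<lambda>(c, g). g(x := c)) (UNIV \<times> supported_on F) (supported_on (insert x F))"
  by (rule bij_betw_byWitness[where f'="\<lambda>f. (f x, f(x := 0))"])
    (use assms in \<open>auto simp: supported_on_def\<close>)

lemma finite_card_supported_on:
  assumes "finite F"
  shows "finite (supported_on F :: (nat \<Rightarrow> 'a::{finite,zero}) set)"
    and "card (supported_on F :: (nat \<Rightarrow> 'a) set) = card (UNIV :: 'a set) ^ card F"
proof -
  have "finite (supported_on F :: (nat \<Rightarrow> 'a) set) \<and>
    card (supported_on F :: (nat \<Rightarrow> 'a) set) = card (UNIV :: 'a set) ^ card F"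
    using assms
  proof (induction F rule: finite_induct)
    case empty
    have "supported_on {} = {(\<lambda>i. 0) :: nat \<Rightarrow> 'a}" unfolding supported_on_def by auto
    then show ?case by simp
  next
    case (insert x F)
    note bij = bij_betw_supported_on_insert[where 'a='a, OF insert(2)]
    then show ?case
      using insert bij_betw_finite[OF bij] bij_betw_same_card[OF bij]
      by (simp add: card_cartesian_product finite_cartesian_product)
  qed
  then show "finite (supported_on F :: (nat \<Rightarrow> 'a) set)"
    and "card (supported_on F :: (nat \<Rightarrow> 'a) set) = card (UNIV :: 'a set) ^ card F" by auto
qed

lemma finite_rref: "finite {M :: nat \<Rightarrow> nat \<Rightarrow> 'a::{finite,field}. rref m p M}"
proof (rule finite_subset)
  let ?rows = "supported_on {1..m} :: (nat \<Rightarrow> 'a) set"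
  show "{M :: nat \<Rightarrow> nat \<Rightarrow> 'a. rref m p M} \<subseteq>
      {M. \<forall>t. (t \<in> {..<p} \<longrightarrow> M t \<in> ?rows) \<and> (t \<notin> {..<p} \<longrightarrow> M t = (\<lambda>i. 0))}"
    using rref_zero unfolding supported_on_def by fastforce
  show "finite {M. \<forall>t. (t \<in> {..<p} \<longrightarrow> M t \<in> ?rows) \<and> (t \<notin> {..<p} \<longrightarrow> M t = (\<lambda>i. 0))}"
    by (rule finite_set_of_finite_funs) (simp_all add: finite_card_supported_on)
qed

lemma rref_no_rows: "{M :: nat \<Rightarrow> nat \<Rightarrow> 'a::field. rref m 0 M} = {\<lambda>t i. 0}"
  unfolding rref_def by auto

lemma rref_no_cols: "{M :: nat \<Rightarrow> nat \<Rightarrow> 'a::field. rref 0 (Suc p) M} = {}"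
  using rref_lead_range[of 0 "Suc p" _ 0] by fastforce

definition free_cols :: "nat \<Rightarrow> nat \<Rightarrow> (nat \<Rightarrow> nat \<Rightarrow> 'a::zero) \<Rightarrow> nat set" where
  "free_cols m p M = {1..m} - (\<lambda>s. lead (M s)) ` {..<p}"

lemma finite_free_cols: "finite (free_cols m p M)"
  unfolding free_cols_def by simp

lemma card_free_cols:
  assumes R: "rref m p M"
  shows "card (free_cols m p M) = m - p"
proof -
  have sub: "(\<lambda>s. lead (M s)) ` {..<p} \<subseteq> {1..m}" using rref_lead_range[OF R] by auto
  have "inj_on (\<lambda>s. lead (M s)) {..<p}" using rref_lead_inj[OF R] by (auto intro: inj_onI)
  then have "card ((\<lambda>s. lead (M s)) ` {..<p}) = p" by (simp add: card_image)
  then show ?thesis unfolding free_cols_def using card_Diff_subset[OF finite_subset[OF sub] sub] by simp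
qed

lemma rref_Suc_no_top_pivot:
  assumes R: "rref (Suc m) k M" and L: "lead (M 0) \<noteq> Suc m"
  shows "rref m k M"
proof -
  have "M t (Suc m) = 0" for t
  proof (cases "t < k")
    case True
    then have "lead (M t) \<le> lead (M 0)" using rref_lead_antimono[OF R, of 0 t] by simp
    moreover have "lead (M 0) \<le> m" using rref_lead_range(2)[OF R, of 0] True L by simp
    ultimately show ?thesis using rref_beyond_lead[OF R True, of "Suc m"] by simp
  qed (use rref_zero[OF R] in simp)
  then show ?thesis using R unfolding rref_def by (auto simp: le_Suc_eq)
qed

lemma rref_tail:
  assumes R: "rref (Suc m) (Suc p) M" and L: "lead (M 0) = Suc m"
  shows "rref m p (\<lambda>t. M (Suc t))"
  unfolding rref_def
proof (intro conjI allI impI)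
  fix t i assume a: "p \<le> t \<or> i \<notin> {1..m}"
  show "M (Suc t) i = 0"
  proof (cases "i = Suc m \<and> t < p")
    case True
    then show ?thesis using rref_pivot_col[OF R, of "Suc t" 0] L by simp
  next
    case False
    then show ?thesis using a rref_zero[OF R, of "Suc t" i] by auto
  qed
qed (use R in \<open>auto simp: rref_def\<close>)

lemma rref_cons_row_top_pivot:
  assumes R: "rref m p M" and g: "g \<in> supported_on (free_cols m p M)"
  shows "rref (Suc m) (Suc p) (cons_row (g(Suc m := 1)) M)" and "lead (g(Suc m := 1)) = Suc m"
    and "g(Suc m := 0) = g"
proof -
  have gz: "g i = 0" if "i \<notin> free_cols m p M" for i
    using g that unfolding supported_on_def by auto
  then show "g(Suc m := 0) = g" unfolding free_cols_def by auto
  have outside: "\<forall>i. i \<notin> {1..Suc m} \<longrightarrow> (g(Suc m := 1)) i = 0"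
    using gz unfolding free_cols_def by auto
  moreover have "\<forall>s<p. (g(Suc m := 1)) (lead (M s)) = 0"
    using gz rref_lead_range(2)[OF R] unfolding free_cols_def by fastforce
  ultimately show "rref (Suc m) (Suc p) (cons_row (g(Suc m := 1)) M)"
    by (intro rref_cons_row[OF R]) simp_all
  have "(g(Suc m := 1)) j = 0" if "Suc m < j" for j using outside[rule_format, of j] that by simp
  then show "lead (g(Suc m := 1)) = Suc m" by (intro lead_eqI) auto
qed

lemma rref_top_pivot_split:
  assumes R: "rref (Suc m) (Suc p) N" and L: "lead (N 0) = Suc m"
  shows "rref m p (\<lambda>t. N (Suc t))"
    and "(N 0)(Suc m := 0) \<in> supported_on (free_cols m p (\<lambda>t. N (Suc t)))"
    and "cons_row ((N 0)(Suc m := 0, Suc m := 1)) (\<lambda>t. N (Suc t)) = N"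
proof -
  have "N 0 (Suc m) = 1" using rref_pivot[OF R, of 0] L by simp
  then have "(N 0)(Suc m := 1) = N 0" by auto
  then show "cons_row ((N 0)(Suc m := 0, Suc m := 1)) (\<lambda>t. N (Suc t)) = N"
    using cons_row_head_tail[of N] by simp
  show "rref m p (\<lambda>t. N (Suc t))" by (rule rref_tail[OF R L])
  show "(N 0)(Suc m := 0) \<in> supported_on (free_cols m p (\<lambda>t. N (Suc t)))"
    unfolding supported_on_def free_cols_def
  proof (intro CollectI allI impI)
    fix i assume i: "i \<notin> {1..m} - (\<lambda>s. lead (N (Suc s))) ` {..<p}"
    show "((N 0)(Suc m := 0)) i = 0"
    proof (cases "i \<in> {1..m}")
      case False
      then show ?thesis using rref_zero[OF R, of 0 i] by (cases "i = Suc m") auto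
    next
      case True
      then obtain s where "s < p" "i = lead (N (Suc s))" using i by auto
      then show ?thesis using rref_pivot_col[OF R, of 0 "Suc s"] True by auto
    qed
  qed
qed

lemma bij_betw_top_pivot:
  "bij_betw (\<lambda>(M, g). cons_row (g(Suc m := 1)) M)
     (SIGMA M:{M :: nat \<Rightarrow> nat \<Rightarrow> 'a::field. rref m p M}. supported_on (free_cols m p M))
     {N. rref (Suc m) (Suc p) N \<and> lead (N 0) = Suc m}"
  by (rule bij_betw_byWitness[where f'="\<lambda>N. (\<lambda>t. N (Suc t), (N 0)(Suc m := 0))"])
    (use rref_cons_row_top_pivot rref_top_pivot_split in \<open>auto simp: image_iff\<close>)

lemma card_rref_top_pivot:
  "card {N :: nat \<Rightarrow> nat \<Rightarrow> 'a::{finite,field}. rref (Suc m) (Suc p) N \<and> lead (N 0) = Suc m}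
   = card (UNIV :: 'a set) ^ (m - p) * card {M :: nat \<Rightarrow> nat \<Rightarrow> 'a. rref m p M}"
proof -
  let ?R = "{M :: nat \<Rightarrow> nat \<Rightarrow> 'a. rref m p M}"
  have "card {N :: nat \<Rightarrow> nat \<Rightarrow> 'a. rref (Suc m) (Suc p) N \<and> lead (N 0) = Suc m}
      = card (SIGMA M:?R. (supported_on (free_cols m p M) :: (nat \<Rightarrow> 'a) set))"
    by (rule bij_betw_same_card[OF bij_betw_top_pivot, symmetric])
  also have "\<dots> = (\<Sum>M\<in>?R. card (supported_on (free_cols m p M) :: (nat \<Rightarrow> 'a) set))"
    by (rule card_SigmaI) (simp_all add: finite_rref finite_card_supported_on finite_free_cols)
  also have "\<dots> = (\<Sum>M\<in>?R. card (UNIV :: 'a set) ^ (m - p))"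
    by (rule sum.cong) (simp_all add: finite_card_supported_on finite_free_cols card_free_cols)
  finally show ?thesis by simp
qed

lemma card_rref_Suc_Suc:
  "card {M :: nat \<Rightarrow> nat \<Rightarrow> 'a::{finite,field}. rref (Suc m) (Suc p) M}
   = card {M :: nat \<Rightarrow> nat \<Rightarrow> 'a. rref m (Suc p) M} + card (UNIV :: 'a set) ^ (m - p) * card {M :: nat \<Rightarrow> nat \<Rightarrow> 'a. rref m p M}"
proof -
  let ?T = "{N :: nat \<Rightarrow> nat \<Rightarrow> 'a. rref (Suc m) (Suc p) N \<and> lead (N 0) = Suc m}"
  have "{M :: nat \<Rightarrow> nat \<Rightarrow> 'a. rref (Suc m) (Suc p) M} = {M. rref m (Suc p) M} \<union> ?T"
    using rref_Suc rref_Suc_no_top_pivot by blast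
  moreover have "{M :: nat \<Rightarrow> nat \<Rightarrow> 'a. rref m (Suc p) M} \<inter> ?T = {}"
    using rref_lead_range(2)[of m "Suc p" _ 0] by fastforce
  moreover have "finite ?T" using finite_rref[of "Suc m" "Suc p"] by (rule finite_subset[rotated]) auto
  ultimately show ?thesis using card_rref_top_pivot by (simp add: card_Un_disjoint finite_rref)
qed

definition gauss_binomial :: "real \<Rightarrow> nat \<Rightarrow> nat \<Rightarrow> real" where
  "gauss_binomial Q m p = (\<Prod>i<p. Q ^ (m - i) - 1) / (\<Prod>i<p. Q ^ Suc i - 1)"

lemma gauss_binomial_0_right [simp]: "gauss_binomial Q m 0 = 1"
  unfolding gauss_binomial_def by simp

lemma gauss_binomial_eq_0:
  assumes "m < p"
  shows "gauss_binomial Q m p = 0"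
proof -
  have "(\<Prod>i<p. Q ^ (m - i) - 1) = 0" using assms by (intro prod_zero bexI[of _ m]) auto
  then show ?thesis unfolding gauss_binomial_def by simp
qed

lemma gauss_binomial_Suc_Suc:
  assumes Q: "Q > 1"
  shows "gauss_binomial Q (Suc m) (Suc p) = gauss_binomial Q m (Suc p) + Q ^ (m - p) * gauss_binomial Q m p"
proof -
  define N where "N = (\<Prod>i<p. Q ^ (m - i) - 1)"
  define D where "D = (\<Prod>i<p. Q ^ Suc i - 1)"
  have pos: "Q ^ Suc i - 1 > 0" for i using one_less_power[OF Q, of "Suc i"] by simp
  have D: "D \<noteq> 0" unfolding D_def using pos by (simp add: prod_pos less_imp_neq[symmetric])
  have E: "Q ^ Suc p - 1 \<noteq> 0" using pos[of p] by simp
  have G1: "gauss_binomial Q (Suc m) (Suc p) = (Q ^ Suc m - 1) * N / (D * (Q ^ Suc p - 1))"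
    unfolding gauss_binomial_def N_def D_def by (subst prod.lessThan_Suc_shift) simp
  have G2: "gauss_binomial Q m (Suc p) = N * (Q ^ (m - p) - 1) / (D * (Q ^ Suc p - 1))"
    unfolding gauss_binomial_def N_def D_def by simp
  have G3: "gauss_binomial Q m p = N / D" unfolding gauss_binomial_def N_def D_def ..
  show ?thesis
  proof (cases "p \<le> m")
    case True
    then have "Q ^ Suc m = Q ^ (m - p) * Q ^ Suc p" by (simp flip: power_add)
    then have "(Q ^ Suc m - 1) * N = N * (Q ^ (m - p) - 1) + Q ^ (m - p) * N * (Q ^ Suc p - 1)"
      by (simp add: algebra_simps)
    then show ?thesis unfolding G1 G2 G3 using D E by (simp add: field_simps)
  next
    case False
    then have "N = 0" unfolding N_def by (intro prod_zero bexI[of _ m]) auto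
    then show ?thesis unfolding G1 G2 G3 by simp
  qed
qed

lemma card_UNIV_field_ge_2: "card (UNIV :: 'a::{finite,field} set) \<ge> 2"
proof -
  have "card {0::'a, 1} \<le> card (UNIV :: 'a set)" by (rule card_mono) auto
  then show ?thesis by simp
qed

lemma card_rref:
  "real (card {M :: nat \<Rightarrow> nat \<Rightarrow> 'a::{finite,field}. rref m p M})
   = gauss_binomial (card (UNIV :: 'a set)) m p"
proof (induction m arbitrary: p)
  case 0
  then show ?case by (cases p) (simp_all add: rref_no_rows rref_no_cols gauss_binomial_eq_0)
next
  case (Suc m)
  show ?case
  proof (cases p)
    case 0
    then show ?thesis by (simp add: rref_no_rows)
  next
    case (Suc p')
    have "real (card (UNIV :: 'a set)) > 1" using card_UNIV_field_ge_2[where 'a='a] by simp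
    from gauss_binomial_Suc_Suc[OF this] show ?thesis
      unfolding Suc card_rref_Suc_Suc using Suc.IH[of "Suc p'"] Suc.IH[of p'] by simp
  qed
qed

lemma qbinom_eq_gauss_binomial: "q \<ge> 2 \<Longrightarrow> qbinom q m (int p) = gauss_binomial (real q) m p"
proof (cases "m < p")
  case True
  then show ?thesis unfolding qbinom_def by (simp add: gauss_binomial_eq_0)
next
  case False
  have "qbinom q m (int p) = (\<Prod>i<p. real q ^ (m - i) - 1) / (\<Prod>i<p. real q ^ (p - i) - 1)"
    unfolding qbinom_def using False by (simp add: prod_dividef)
  also have "(\<Prod>i<p. real q ^ (p - i) - 1) = (\<Prod>i<p. real q ^ Suc (p - Suc i) - 1)"
    by (intro prod.cong) (auto simp: Suc_diff_Suc)
  also have "\<dots> = (\<Prod>i<p. real q ^ Suc i - 1)"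
    by (rule prod.nat_diff_reindex[where g="\<lambda>i. real q ^ Suc i - 1"])
  finally show ?thesis unfolding gauss_binomial_def .
qed

definition has_first_cols ::
  "nat \<Rightarrow> nat \<Rightarrow> (nat \<Rightarrow> nat) \<Rightarrow> (nat \<Rightarrow> nat \<Rightarrow> 'a) \<Rightarrow> (nat \<Rightarrow> nat \<Rightarrow> 'a::zero) \<Rightarrow> bool" where
  "has_first_cols k j v A M \<longleftrightarrow>
     (\<forall>i\<in>{1..j}. (if \<exists>t<k. lead (M t) = i then 1 else 0) = v i \<and> (\<forall>t<k. M t i = A t i))"

lemma ext_first_cols_row_span:
  "rref n k M \<Longrightarrow> ext_first_cols n k j (row_span k M) v A \<longleftrightarrow> has_first_cols k j v A M"
  unfolding ext_first_cols_def has_first_cols_def idv_def by (simp add: RE_rref)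

lemma downward_closed_eq_lessThan:
  fixes U :: "nat set"
  assumes "finite U" and "\<forall>t\<in>U. \<forall>s\<le>t. s \<in> U"
  shows "U = {..<card U}"
proof -
  obtain m where m: "m \<notin> U" using assms(1) ex_new_if_finite infinite_UNIV_nat by blast
  define u where "u = (LEAST x. x \<notin> U)"
  have "u \<notin> U" unfolding u_def by (rule LeastI[of _ m]) (rule m)
  moreover have "{..<u} \<subseteq> U" using not_less_Least unfolding u_def by auto
  ultimately have "U = {..<u}" using assms(2) by (auto simp: not_less)
  then show ?thesis by simp
qed

lemma has_first_cols_sum_eq_card:
  assumes R: "rref n k M" and E: "has_first_cols k j v A M"
  shows "(\<Sum>l=1..j. v l) = card {t. t < k \<and> lead (M t) \<le> j}"
proof -
  define T where "T = {t. t < k \<and> lead (M t) \<le> j}"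
  have "v l = (if l \<in> (\<lambda>t. lead (M t)) ` T then 1 else 0)" if l: "l \<in> {1..j}" for l
  proof -
    have "v l = (if \<exists>t<k. lead (M t) = l then 1 else 0)"
      using E l unfolding has_first_cols_def by simp
    moreover have "(\<exists>t<k. lead (M t) = l) \<longleftrightarrow> l \<in> (\<lambda>t. lead (M t)) ` T"
      using l unfolding T_def by auto
    ultimately show ?thesis by simp
  qed
  then have "(\<Sum>l=1..j. v l) = card ({1..j} \<inter> (\<lambda>t. lead (M t)) ` T)"
    by (simp add: sum.If_cases)
  also have "{1..j} \<inter> (\<lambda>t. lead (M t)) ` T = (\<lambda>t. lead (M t)) ` T"
    using rref_lead_range(1)[OF R] unfolding T_def by auto
  also have "card \<dots> = card T"
    by (rule card_image) (auto intro: inj_onI rref_lead_inj[OF R] simp: T_def)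
  finally show ?thesis unfolding T_def .
qed

lemma has_first_cols_pivot_rows:
  assumes R: "rref n k M" and E: "has_first_cols k j v A M"
  defines "p \<equiv> k - (\<Sum>l=1..j. v l)"
  shows "(\<Sum>l=1..j. v l) \<le> k" and "t < k \<Longrightarrow> j < lead (M t) \<longleftrightarrow> t < p"
proof -
  define T where "T = {t. t < k \<and> lead (M t) \<le> j}"
  define U where "U = {t. t < k \<and> j < lead (M t)}"
  have "T \<union> U = {..<k}" and "T \<inter> U = {}" unfolding T_def U_def by auto
  then have TU: "card T + card U = k"
    using card_Un_disjoint[of T U] unfolding T_def U_def by simp
  note cT = has_first_cols_sum_eq_card[OF R E, folded T_def]
  then show "(\<Sum>l=1..j. v l) \<le> k" using TU by simp
  have cU: "card U = p" using TU unfolding p_def cT by simp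
  have "U = {..<card U}"
  proof (rule downward_closed_eq_lessThan)
    show "finite U" unfolding U_def by simp
    show "\<forall>t\<in>U. \<forall>s\<le>t. s \<in> U"
    proof (intro ballI allI impI)
      fix t s assume "t \<in> U" and st: "s \<le> t"
      then have t: "t < k" and "j < lead (M t)" unfolding U_def by auto
      moreover have "lead (M t) \<le> lead (M s)" by (rule rref_lead_antimono[OF R st t])
      ultimately show "s \<in> U" unfolding U_def using st by simp
    qed
  qed
  then have "t < k \<and> j < lead (M t) \<longleftrightarrow> t < p" using cU unfolding U_def by auto
  then show "t < k \<Longrightarrow> j < lead (M t) \<longleftrightarrow> t < p" by blast
qed

text \<open>Columns are indexed \<open>n, \<dots>, 1\<close> from left to right, so the columns \<open>j + 1, \<dots>, n\<close> of the
  top \<open>p\<close> rows form the top-left block; it is re-indexed as a \<open>p \<times> (n - j)\<close> matrix.\<close>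

definition top_left_block :: "nat \<Rightarrow> nat \<Rightarrow> nat \<Rightarrow> (nat \<Rightarrow> nat \<Rightarrow> 'a) \<Rightarrow> nat \<Rightarrow> nat \<Rightarrow> 'a::zero" where
  "top_left_block n j p M = (\<lambda>t i. if t < p \<and> 1 \<le> i \<and> i \<le> n - j then M t (i + j) else 0)"

definition replace_top_left_block ::
  "nat \<Rightarrow> nat \<Rightarrow> (nat \<Rightarrow> nat \<Rightarrow> 'a) \<Rightarrow> (nat \<Rightarrow> nat \<Rightarrow> 'a) \<Rightarrow> nat \<Rightarrow> nat \<Rightarrow> 'a" where
  "replace_top_left_block j p B M = (\<lambda>t i. if t < p \<and> j < i then B t (i - j) else M t i)"

lemma lead_top_left_block:
  assumes R: "rref n k M" and t: "t < p" "p \<le> k" and L: "j < lead (M t)"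
  shows "lead (top_left_block n j p M t) = lead (M t) - j"
proof (rule lead_eqI)
  have "t < k" using t by simp
  then show "top_left_block n j p M t (lead (M t) - j) \<noteq> 0"
    unfolding top_left_block_def using t L rref_pivot[OF R \<open>t < k\<close>]
      diff_le_mono[OF rref_lead_range(2)[OF R \<open>t < k\<close>], of j] by auto
  show "\<forall>i>lead (M t) - j. top_left_block n j p M t i = 0"
    unfolding top_left_block_def using rref_beyond_lead[OF R \<open>t < k\<close>] L by auto
qed

lemma rref_top_left_block:
  assumes R: "rref n k M" and p: "p \<le> k" and L: "\<forall>t<p. j < lead (M t)"
  shows "rref (n - j) p (top_left_block n j p M)" (is "rref _ _ ?B")
proof -
  have LB: "lead (?B t) = lead (M t) - j" if "t < p" for t
    using lead_top_left_block[OF R that p] L that by simp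
  show ?thesis unfolding rref_def
  proof (intro conjI allI impI)
    fix t i assume "p \<le> t \<or> i \<notin> {1..n - j}"
    then show "?B t i = 0" unfolding top_left_block_def by auto
  next
    fix t assume t: "t < p"
    then have "t < k" using p by simp
    show "?B t (lead (?B t)) = 1"
      unfolding LB[OF t] unfolding top_left_block_def
      using t L rref_pivot[OF R \<open>t < k\<close>] rref_lead_range(2)[OF R \<open>t < k\<close>] by auto
    then show "\<exists>i. ?B t i \<noteq> 0" by (intro exI[of _ "lead (?B t)"]) simp
  next
    fix s t assume "s < t \<and> t < p"
    then show "lead (?B t) < lead (?B s)"
      using LB[of s] LB[of t] L rref_lead_mono[OF R, of s t] p by auto
  next
    fix s t assume s: "s < p" and t: "t < p" and st: "s \<noteq> t"
    then have "s < k" "t < k" using p by auto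
    then show "?B s (lead (?B t)) = 0"
      unfolding LB[OF t] unfolding top_left_block_def
      using rref_pivot_col[OF R] st L t rref_lead_range(2)[OF R] by auto
  qed
qed

lemma lead_replace_top_left_block:
  assumes R': "rref (n - j) p B" and t: "t < p"
  shows "lead (replace_top_left_block j p B M t) = lead (B t) + j"
proof (rule lead_eqI)
  show "replace_top_left_block j p B M t (lead (B t) + j) \<noteq> 0"
    unfolding replace_top_left_block_def using t rref_pivot[OF R' t] rref_lead_range(1)[OF R' t] by auto
  show "\<forall>i>lead (B t) + j. replace_top_left_block j p B M t i = 0"
    unfolding replace_top_left_block_def using t rref_beyond_lead[OF R' t] by auto
qed

lemma replace_top_left_block_bottom: "p \<le> t \<Longrightarrow> replace_top_left_block j p B M t = M t"
  unfolding replace_top_left_block_def by simp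

lemma lead_replace_top_left_block_gt:
  "rref (n - j) p B \<Longrightarrow> t < p \<Longrightarrow> j < lead (replace_top_left_block j p B M t)"
  using lead_replace_top_left_block rref_lead_range(1) by fastforce

lemma rref_bottom_rows_zero:
  assumes R: "rref n k M" and L: "\<forall>t<k. j < lead (M t) \<longleftrightarrow> t < p"
    and t: "p \<le> t" and i: "j < i"
  shows "M t i = 0"
proof (cases "t < k")
  case True
  then have "lead (M t) < i" using L t i by (meson le_less_trans not_less)
  then show ?thesis using rref_beyond_lead[OF R True] by simp
qed (use rref_zero[OF R] in simp)

context
  fixes n k j p :: nat and M B :: "nat \<Rightarrow> nat \<Rightarrow> 'a::field"
  assumes R: "rref n k M" and R': "rref (n - j) p B" and L: "\<forall>t<k. j < lead (M t) \<longleftrightarrow> t < p"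
begin

lemma replace_top_left_block_bottom_lead:
  assumes "\<not> t < p" and "t < k"
  shows "lead (replace_top_left_block j p B M t) = lead (M t)" and "lead (M t) \<le> j"
  using assms L replace_top_left_block_bottom[of p t j B M] by auto

lemma replace_top_left_block_lead_mono:
  assumes st: "s < t" "t < k"
  shows "lead (replace_top_left_block j p B M t) < lead (replace_top_left_block j p B M s)"
proof (cases "t < p")
  case True
  then show ?thesis using st lead_replace_top_left_block[OF R'] rref_lead_mono[OF R', of s t] by auto
next
  case False
  note bottom = replace_top_left_block_bottom_lead[OF False st(2)]
  show ?thesis
  proof (cases "s < p")
    case True
    then show ?thesis using bottom lead_replace_top_left_block_gt[OF R' True, of M] by simp
  next
    case False
    then show ?thesis using bottom st replace_top_left_block_bottom_lead[OF False] rref_lead_mono[OF R st]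
      by simp
  qed
qed

lemma replace_top_left_block_pivot_col:
  assumes s: "s < k" and t: "t < k" and st: "s \<noteq> t"
  shows "replace_top_left_block j p B M s (lead (replace_top_left_block j p B M t)) = 0"
proof (cases "t < p")
  case True
  show ?thesis
  proof (cases "s < p")
    case True
    then show ?thesis unfolding lead_replace_top_left_block[OF R' \<open>t < p\<close>]
      unfolding replace_top_left_block_def
      using rref_pivot_col[OF R' True \<open>t < p\<close>] rref_lead_range(1)[OF R' \<open>t < p\<close>] st by auto
  next
    case False
    then show ?thesis using replace_top_left_block_bottom[of p s j B M]
        rref_bottom_rows_zero[OF R L _ lead_replace_top_left_block_gt[OF R' True]] by simp
  qed
next
  case False
  then show ?thesis using replace_top_left_block_bottom_lead[OF False t]
    unfolding replace_top_left_block_def using rref_pivot_col[OF R s t] st by auto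
qed

lemma rref_replace_top_left_block:
  assumes j: "j \<le> n" and p: "p \<le> k"
  shows "rref n k (replace_top_left_block j p B M)" (is "rref _ _ ?N")
  unfolding rref_def
proof (intro conjI allI impI replace_top_left_block_lead_mono replace_top_left_block_pivot_col)
  fix t i assume ti: "k \<le> t \<or> i \<notin> {1..n}"
  show "?N t i = 0"
  proof (cases "t < p \<and> j < i")
    case True
    then have "i - j \<notin> {1..n - j}" using ti p j by auto
    then show ?thesis unfolding replace_top_left_block_def using True rref_zero[OF R'] by auto
  next
    case False
    then show ?thesis unfolding replace_top_left_block_def using ti rref_zero[OF R] by auto
  qed
next
  fix t assume t: "t < k"
  show "?N t (lead (?N t)) = 1"
  proof (cases "t < p")
    case True
    then show ?thesis unfolding lead_replace_top_left_block[OF R' True]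
      unfolding replace_top_left_block_def
      using rref_pivot[OF R' True] rref_lead_range(1)[OF R' True] by auto
  qed (use replace_top_left_block_bottom[of p t j B M] rref_pivot[OF R t] in simp)
  then show "\<exists>i. ?N t i \<noteq> 0" by (intro exI[of _ "lead (?N t)"]) simp
qed auto

end

lemma has_first_cols_replace_top_left_block:
  assumes R': "rref (n - j) p B" and E: "has_first_cols k j v A M"
    and L: "\<forall>t<k. j < lead (M t) \<longleftrightarrow> t < p"
  shows "has_first_cols k j v A (replace_top_left_block j p B M)" (is "has_first_cols _ _ _ _ ?N")
  unfolding has_first_cols_def
proof
  fix i assume i: "i \<in> {1..j}"
  have "(\<exists>t<k. lead (?N t) = i) \<longleftrightarrow> (\<exists>t<k. lead (M t) = i)"
    using L i lead_replace_top_left_block_gt[OF R'] replace_top_left_block_bottom[of p _ j B M]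
    by (metis atLeastAtMost_iff not_le)
  moreover have "?N t i = M t i" for t using i unfolding replace_top_left_block_def by simp
  ultimately show "(if \<exists>t<k. lead (?N t) = i then 1 else 0) = v i \<and> (\<forall>t<k. ?N t i = A t i)"
    using E i unfolding has_first_cols_def by simp
qed
lemma top_left_block_replace_top_left_block:
  assumes "rref (n - j) p B"
  shows "top_left_block n j p (replace_top_left_block j p B M) = B"
  unfolding top_left_block_def replace_top_left_block_def using rref_zero[OF assms] by (auto intro!: ext)

lemma replace_top_left_block_top_left_block:
  assumes R: "rref n k M" and agree: "\<And>t i. i \<le> j \<or> p \<le> t \<Longrightarrow> M t i = M0 t i"
  shows "replace_top_left_block j p (top_left_block n j p M) M0 = M"
proof (intro ext)
  fix t i
  have "M t i = 0" if "n < i" using that rref_zero[OF R] by simp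
  then show "replace_top_left_block j p (top_left_block n j p M) M0 t i = M t i"
    unfolding top_left_block_def replace_top_left_block_def using agree by auto
qed

text \<open>The count does not depend on the particular prescribed columns: replacing the top-left block
  of one matrix with these first columns by an arbitrary reduced echelon block yields all others.\<close>

lemma bij_betw_top_left_block:
  assumes R0: "rref n k M0" and E0: "has_first_cols k j v A M0" and j: "j \<le> n"
  defines "p \<equiv> k - (\<Sum>l=1..j. v l)"
  shows "bij_betw (top_left_block n j p)
    {M. rref n k M \<and> has_first_cols k j v A M} {B. rref (n - j) p B}"
proof -
  have pivots: "\<forall>t<k. j < lead (M t) \<longleftrightarrow> t < p" "p \<le> k"
    if "rref n k M" "has_first_cols k j v A M" for M :: "nat \<Rightarrow> nat \<Rightarrow> 'a"
    using has_first_cols_pivot_rows[OF that] unfolding p_def by auto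
  note L0 = pivots[OF R0 E0]
  show ?thesis
  proof (rule bij_betw_byWitness[where f'="\<lambda>B. replace_top_left_block j p B M0"]; safe)
    fix M assume R: "rref n k M" and E: "has_first_cols k j v A M"
    note L = pivots[OF R E]
    have "M t i = M0 t i" if "i \<le> j \<or> p \<le> t" for t i
    proof (cases "j < i")
      case True
      then show ?thesis
        using that rref_bottom_rows_zero[OF R L(1)] rref_bottom_rows_zero[OF R0 L0(1)] by simp
    next
      case False
      then show ?thesis
        using E E0 rref_zero[OF R, of t i] rref_zero[OF R0, of t i] unfolding has_first_cols_def
        by (cases "t < k \<and> i \<in> {1..j}") auto
    qed
    then show "replace_top_left_block j p (top_left_block n j p M) M0 = M"
      by (rule replace_top_left_block_top_left_block[OF R])
    show "rref (n - j) p (top_left_block n j p M)"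
      using L by (intro rref_top_left_block[OF R]) simp_all
  next
    fix B :: "nat \<Rightarrow> nat \<Rightarrow> 'a" assume R': "rref (n - j) p B"
    show "top_left_block n j p (replace_top_left_block j p B M0) = B"
      by (rule top_left_block_replace_top_left_block[OF R'])
    show "rref n k (replace_top_left_block j p B M0)"
      by (rule rref_replace_top_left_block[OF R0 R' L0(1) j L0(2)])
    show "has_first_cols k j v A (replace_top_left_block j p B M0)"
      by (rule has_first_cols_replace_top_left_block[OF R' E0 L0(1)])
  qed
qed

lemma Grass_ext_first_cols_eq:
  "{X \<in> Grass n k. ext_first_cols n k j X v A}
   = row_span k ` {M :: nat \<Rightarrow> nat \<Rightarrow> 'a::field. rref n k M \<and> has_first_cols k j v A M}"
  using Grass_rref row_span_rref_Grass ext_first_cols_row_span by fastforce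

lemma inj_on_row_span_rref: "inj_on (row_span k) {M. rref n k M}"
  by (rule inj_onI) (metis RE_rref mem_Collect_eq)

theorem lemma3:
  fixes n k j :: nat and v :: "nat \<Rightarrow> nat" and A :: "nat \<Rightarrow> nat \<Rightarrow> 'a::{finite,field}"
  assumes "k \<le> n" and "1 \<le> j" and "j \<le> n"
    and "\<exists>Y\<in>(Grass n k :: (nat \<Rightarrow> 'a) set set). ext_first_cols n k j Y v A"
  shows "real (card {X\<in>(Grass n k :: (nat \<Rightarrow> 'a) set set). ext_first_cols n k j X v A})
         = qbinom (card (UNIV :: 'a set)) (n - j) (int k - int (\<Sum>l=1..j. v l))"
proof -
  obtain M0 :: "nat \<Rightarrow> nat \<Rightarrow> 'a" where R0: "rref n k M0" and E0: "has_first_cols k j v A M0"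
    using assms(4) Grass_rref ext_first_cols_row_span by metis
  define p where "p = k - (\<Sum>l=1..j. v l)"
  have "int k - int (\<Sum>l=1..j. v l) = int p"
    using has_first_cols_pivot_rows(1)[OF R0 E0] unfolding p_def by simp
  moreover have "card {X\<in>(Grass n k :: (nat \<Rightarrow> 'a) set set). ext_first_cols n k j X v A}
      = card {M :: nat \<Rightarrow> nat \<Rightarrow> 'a. rref n k M \<and> has_first_cols k j v A M}"
    unfolding Grass_ext_first_cols_eq
    by (rule card_image) (rule inj_on_subset[OF inj_on_row_span_rref], blast)
  moreover have "\<dots> = card {B :: nat \<Rightarrow> nat \<Rightarrow> 'a. rref (n - j) p B}"
    using bij_betw_same_card[OF bij_betw_top_left_block[OF R0 E0 assms(3)]] unfolding p_def .
  ultimately show ?thesis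
    using card_rref[where 'a='a] qbinom_eq_gauss_binomial[OF card_UNIV_field_ge_2[where 'a='a]]
    by simp
qed

end
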